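(* Let $X$ be a Dedekind complete vector lattice and let $E,T\in\mathcal{L}^r(X)$ be positive operators such that (i) $E^2=E$, (ii) $ET=TE=T$, and (iii) $E\wedge T=0$ in $\mathcal{L}^r(X)$. Let $Y=E(X)$ with the order inherited from $X$ (a Dedekind complete vector lattice). Then $T$ maps $Y$ into $Y$ and $\mathrm{id}_Y\wedge T|_Y=0$ in $\mathcal{L}^r(Y)$.
   Context: $\mathcal{L}^r(X)$ denotes the space of regular operators (differences of positive operators) on $X$, which is a Dedekind complete vector lattice under the Riesz–Kantorovich formulas when $X$ is Dedekind complete; the same for $\mathcal{L}^r(Y)$. *)

theory Defs
  imports Complex_Main
begin

text \<open>Operators on an ordered vector space Y (given as a carrier subset of an
ambient type, with the order inherited from it). Operators are functions on the
ambient type; only their values on Y matter.\<close>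

definition lin_op_on :: "'a::real_vector set \<Rightarrow> ('a \<Rightarrow> 'a) \<Rightarrow> bool" where
  "lin_op_on Y S \<longleftrightarrow> (\<forall>y\<in>Y. S y \<in> Y)
     \<and> (\<forall>x\<in>Y. \<forall>y\<in>Y. S (x + y) = S x + S y)
     \<and> (\<forall>c. \<forall>x\<in>Y. S (c *\<^sub>R x) = c *\<^sub>R S x)"

definition positive_op_on :: "'a::ordered_real_vector set \<Rightarrow> ('a \<Rightarrow> 'a) \<Rightarrow> bool" where
  "positive_op_on Y S \<longleftrightarrow> lin_op_on Y S \<and> (\<forall>y\<in>Y. 0 \<le> y \<longrightarrow> 0 \<le> S y)"

definition regular_op_on :: "'a::ordered_real_vector set \<Rightarrow> ('a \<Rightarrow> 'a) \<Rightarrow> bool" where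
  "regular_op_on Y S \<longleftrightarrow> (\<exists>P Q. positive_op_on Y P \<and> positive_op_on Y Q
       \<and> (\<forall>y\<in>Y. S y = P y - Q y))"

definition op_le_on :: "'a::ordered_real_vector set \<Rightarrow> ('a \<Rightarrow> 'a) \<Rightarrow> ('a \<Rightarrow> 'a) \<Rightarrow> bool" where
  "op_le_on Y S R \<longleftrightarrow> positive_op_on Y (\<lambda>y. R y - S y)"

definition is_inf_Lr :: "'a::ordered_real_vector set \<Rightarrow> ('a \<Rightarrow> 'a) \<Rightarrow> ('a \<Rightarrow> 'a) \<Rightarrow> ('a \<Rightarrow> 'a) \<Rightarrow> bool" where
  "is_inf_Lr Y A B C \<longleftrightarrow> regular_op_on Y A \<and> regular_op_on Y B \<and> regular_op_on Y C
     \<and> op_le_on Y C A \<and> op_le_on Y C B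
     \<and> (\<forall>S. regular_op_on Y S \<and> op_le_on Y S A \<and> op_le_on Y S B \<longrightarrow> op_le_on Y S C)"

end

theory Submission
  imports Defs
begin

text \<open>An operator S on Y = E(X) below both id and T lifts to the operator S \<circ> E on X,
which lies below id \<circ> E = E and T \<circ> E = T, hence below E \<and> T = 0. Since E is the
identity on Y, restricting S \<circ> E back to Y gives S \<le> 0.\<close>

lemma positive_op_on_UNIV_imp_linear: "positive_op_on UNIV f \<Longrightarrow> linear f"
  unfolding positive_op_on_def lin_op_on_def linear_iff by auto

lemma lin_op_on_diff:
  assumes "subspace Y" "lin_op_on Y A" "lin_op_on Y B"
  shows "lin_op_on Y (\<lambda>y. A y - B y)"
  using assms unfolding lin_op_on_def
  by (auto simp: subspace_diff scaleR_diff_right algebra_simps)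

lemma regular_op_on_imp_lin_op_on:
  assumes "subspace Y" "regular_op_on Y S"
  shows "lin_op_on Y S"
proof -
  obtain P Q where PQ: "positive_op_on Y P" "positive_op_on Y Q" "\<forall>y\<in>Y. S y = P y - Q y"
    using assms(2) unfolding regular_op_on_def by blast
  have "lin_op_on Y (\<lambda>y. P y - Q y)"
    using lin_op_on_diff[OF assms(1)] PQ(1,2) unfolding positive_op_on_def by blast
  with PQ(3) assms(1) show ?thesis
    unfolding lin_op_on_def by (auto simp: subspace_add subspace_scale)
qed

lemma positive_op_on_zero: "0 \<in> Y \<Longrightarrow> positive_op_on Y (\<lambda>_. 0)"
  unfolding positive_op_on_def lin_op_on_def by simp

lemma positive_imp_regular_op_on:
  assumes "0 \<in> Y" "positive_op_on Y P"
  shows "regular_op_on Y P"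
  using assms(2) positive_op_on_zero[OF assms(1)] unfolding regular_op_on_def by fastforce

lemma positive_op_on_id: "positive_op_on Y id"
  unfolding positive_op_on_def lin_op_on_def by simp

lemma zero_op_le_on_iff: "op_le_on Y (\<lambda>_. 0) P \<longleftrightarrow> positive_op_on Y P"
  by (simp add: op_le_on_def)

lemma positive_op_on_subset:
  assumes "positive_op_on X T" "Y \<subseteq> X" "\<forall>y\<in>Y. T y \<in> Y"
  shows "positive_op_on Y T"
  using assms unfolding positive_op_on_def lin_op_on_def by (meson subsetD)

lemma positive_op_on_comp:
  assumes "positive_op_on X E" "E ` X \<subseteq> Y" "Y \<subseteq> X" "positive_op_on Y R"
  shows "positive_op_on X (R \<circ> E)"
  using assms unfolding positive_op_on_def lin_op_on_def by (auto simp: image_subset_iff)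

lemma regular_op_on_comp:
  assumes "positive_op_on X E" "E ` X \<subseteq> Y" "Y \<subseteq> X" "regular_op_on Y S"
  shows "regular_op_on X (S \<circ> E)"
proof -
  obtain P Q where PQ: "positive_op_on Y P" "positive_op_on Y Q" "\<forall>y\<in>Y. S y = P y - Q y"
    using assms(4) unfolding regular_op_on_def by blast
  have "\<forall>x\<in>X. (S \<circ> E) x = (P \<circ> E) x - (Q \<circ> E) x"
    using PQ(3) assms(2) by auto
  with positive_op_on_comp[OF assms(1-3) PQ(1)] positive_op_on_comp[OF assms(1-3) PQ(2)]
  show ?thesis
    unfolding regular_op_on_def by blast
qed

lemma op_le_on_range_iff:
  assumes E: "positive_op_on UNIV E" "E \<circ> E = E"
    and S: "regular_op_on (range E) S" and R: "regular_op_on (range E) R"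
  shows "op_le_on (range E) S R \<longleftrightarrow> op_le_on UNIV (S \<circ> E) (R \<circ> E)"
proof
  assume "op_le_on (range E) S R"
  then have "positive_op_on (range E) (\<lambda>y. R y - S y)"
    unfolding op_le_on_def .
  then have "positive_op_on UNIV ((\<lambda>y. R y - S y) \<circ> E)"
    by (rule positive_op_on_comp[OF E(1) subset_refl subset_UNIV])
  then show "op_le_on UNIV (S \<circ> E) (R \<circ> E)"
    unfolding op_le_on_def comp_def .
next
  assume le: "op_le_on UNIV (S \<circ> E) (R \<circ> E)"
  have Y: "subspace (range E)"
    by (rule linear_subspace_image[OF positive_op_on_UNIV_imp_linear[OF E(1)] subspace_UNIV])
  have lin: "lin_op_on (range E) (\<lambda>y. R y - S y)"
    by (rule lin_op_on_diff[OF Y regular_op_on_imp_lin_op_on[OF Y R] regular_op_on_imp_lin_op_on[OF Y S]])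
  show "op_le_on (range E) S R"
    unfolding op_le_on_def positive_op_on_def
  proof (intro conjI ballI impI lin)
    fix y assume "y \<in> range E" "0 \<le> y"
    then obtain x where "y = E x"
      by blast
    then have "E y = y"
      using comp_eq_dest_lhs[OF E(2)] by simp
    with \<open>0 \<le> y\<close> le show "0 \<le> R y - S y"
      unfolding op_le_on_def positive_op_on_def by (metis UNIV_I comp_apply)
  qed
qed

lemma is_inf_Lr_zero_on_range:
  assumes E: "positive_op_on UNIV E" "E \<circ> E = E"
    and A: "positive_op_on (range E) A" and B: "positive_op_on (range E) B"
    and inf: "is_inf_Lr UNIV (A \<circ> E) (B \<circ> E) (\<lambda>_. 0)"
  shows "is_inf_Lr (range E) A B (\<lambda>_. 0)"
proof -
  have "0 \<in> range E"
    by (metis linear_0 positive_op_on_UNIV_imp_linear[OF E(1)] rangeI)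
  then have reg_A: "regular_op_on (range E) A"
    and reg_B: "regular_op_on (range E) B"
    and reg_0: "regular_op_on (range E) (\<lambda>_. 0)"
    using A B positive_op_on_zero positive_imp_regular_op_on by blast+
  have greatest: "op_le_on (range E) S (\<lambda>_. 0)"
    if S: "regular_op_on (range E) S" "op_le_on (range E) S A" "op_le_on (range E) S B" for S
  proof -
    have "op_le_on UNIV (S \<circ> E) (A \<circ> E)" "op_le_on UNIV (S \<circ> E) (B \<circ> E)"
      using S op_le_on_range_iff[OF E S(1)] reg_A reg_B by blast+
    moreover have "regular_op_on UNIV (S \<circ> E)"
      by (rule regular_op_on_comp[OF E(1) subset_refl subset_UNIV S(1)])
    ultimately have "op_le_on UNIV (S \<circ> E) (\<lambda>_. 0)"
      using inf unfolding is_inf_Lr_def by blast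
    then have "op_le_on UNIV (S \<circ> E) ((\<lambda>_. 0) \<circ> E)"
      by (simp add: comp_def)
    then show ?thesis
      using op_le_on_range_iff[OF E S(1) reg_0] by blast
  qed
  show ?thesis
    unfolding is_inf_Lr_def zero_op_le_on_iff
    using A B reg_A reg_B reg_0 greatest by blast
qed

theorem lemma4p2:
  fixes E T :: "'a::{ordered_real_vector, conditionally_complete_lattice} \<Rightarrow> 'a"
  assumes "positive_op_on UNIV E" and "positive_op_on UNIV T"
    and "E \<circ> E = E"
    and "E \<circ> T = T" and "T \<circ> E = T"
    and "is_inf_Lr UNIV E T (\<lambda>_. 0)"
  shows "(\<forall>y\<in>range E. T y \<in> range E) \<and> is_inf_Lr (range E) id T (\<lambda>_. 0)"
proof
  show T_range: "\<forall>y\<in>range E. T y \<in> range E"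
    using assms(4) by (metis comp_apply rangeI)
  have "is_inf_Lr UNIV (id \<circ> E) (T \<circ> E) (\<lambda>_. 0)"
    using assms(5,6) by simp
  then show "is_inf_Lr (range E) id T (\<lambda>_. 0)"
    using is_inf_Lr_zero_on_range[OF assms(1,3) positive_op_on_id]
      positive_op_on_subset[OF assms(2) subset_UNIV T_range] by blast
qed

end
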